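(* A non-empty graph $T$ is a $\mathsf{TJ}_n$-graph for infinitely many integers $n$ if and only if there exists an integer $k$ such that $T$ is a maximum $\mathsf{TJ}_k$-graph.
   Context: Graphs are finite, simple, undirected; non-empty means having at least one vertex. $\mathsf{TJ}_k(G)$ is the graph on the cliques of $G$ of size $k$ where $C, C'$ are adjacent iff $|C \setminus C'| = |C' \setminus C| = 1$. $T$ is a $\mathsf{TJ}_k$-graph if $T \cong \mathsf{TJ}_k(G)$ for some graph $G$, and a maximum $\mathsf{TJ}_k$-graph if $T \cong \mathsf{TJ}_k(G)$ for some $G$ with $\omega(G) = k$ ($\omega$ = maximum clique size). *)

theory Defs
  imports Main
begin

type_synonym 'a graph = "'a set \<times> 'a set set"

definition is_graph :: "'a graph \<Rightarrow> bool" where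
  "is_graph G \<longleftrightarrow> finite (fst G) \<and>
     (\<forall>e \<in> snd G. e \<subseteq> fst G \<and> card e = 2)"

definition is_clique :: "'a graph \<Rightarrow> 'a set \<Rightarrow> bool" where
  "is_clique G C \<longleftrightarrow> C \<subseteq> fst G \<and>
     (\<forall>x \<in> C. \<forall>y \<in> C. x \<noteq> y \<longrightarrow> {x, y} \<in> snd G)"

definition cliques_of_size :: "nat \<Rightarrow> 'a graph \<Rightarrow> 'a set set" where
  "cliques_of_size k G = {C. is_clique G C \<and> card C = k}"

definition clique_number :: "'a graph \<Rightarrow> nat" where
  "clique_number G = Max {card C | C. is_clique G C}"

definition TJ :: "nat \<Rightarrow> 'a graph \<Rightarrow> 'a set graph" where
  "TJ k G = (cliques_of_size k G,
     {{C, C'} | C C'. C \<in> cliques_of_size k G \<and> C' \<in> cliques_of_size k G \<and>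
        card (C - C') = 1 \<and> card (C' - C) = 1})"

definition graph_iso :: "'a graph \<Rightarrow> 'b graph \<Rightarrow> bool" where
  "graph_iso G H \<longleftrightarrow> (\<exists>f. bij_betw f (fst G) (fst H) \<and>
     (\<forall>x \<in> fst G. \<forall>y \<in> fst G. {x, y} \<in> snd G \<longleftrightarrow> {f x, f y} \<in> snd H))"

text \<open>Source graphs G are taken on vertex type nat; every finite graph is
  isomorphic to one of these.\<close>
definition TJ_graph :: "nat \<Rightarrow> 'a graph \<Rightarrow> bool" where
  "TJ_graph k T \<longleftrightarrow> (\<exists>G :: nat graph. is_graph G \<and> graph_iso T (TJ k G))"

definition max_TJ_graph :: "nat \<Rightarrow> 'a graph \<Rightarrow> bool" where
  "max_TJ_graph k T \<longleftrightarrow>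
     (\<exists>G :: nat graph. is_graph G \<and> clique_number G = k \<and> graph_iso T (TJ k G))"

end

theory Submission
  imports Defs "HOL-Library.Infinite_Set"
begin

text \<open>If \<open>T \<cong> TJ\<^sub>k(G)\<close> with \<open>\<omega>(G) = k\<close>, then joining \<open>G\<close> with a clique \<open>U\<close> of \<open>n - k\<close> new
  vertices turns the \<open>k\<close>-cliques \<open>A\<close> of \<open>G\<close> bijectively into the \<open>n\<close>-cliques \<open>A \<union> U\<close>, and
  symmetric differences are unchanged; so \<open>T\<close> is a \<open>TJ\<^sub>n\<close>-graph for every \<open>n \<ge> k\<close>.
  Conversely, if \<open>T \<cong> TJ\<^sub>n(G)\<close> with \<open>n \<ge> |V(T)| > 0\<close>, then \<open>G\<close> has an \<open>n\<close>-clique, and a clique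
  of size \<open>n + 1\<close> would contain \<open>n + 1\<close> distinct \<open>n\<close>-cliques, too many; so \<open>\<omega>(G) = n\<close>.\<close>

lemma is_clique_subset: "is_clique G C \<Longrightarrow> B \<subseteq> C \<Longrightarrow> is_clique G B"
  unfolding is_clique_def by blast

lemma finite_clique: "is_graph G \<Longrightarrow> is_clique G C \<Longrightarrow> finite C"
  unfolding is_graph_def is_clique_def using finite_subset by blast

lemma finite_cliques_of_size: "is_graph G \<Longrightarrow> finite (cliques_of_size k G)"
  unfolding is_graph_def cliques_of_size_def is_clique_def
  by (rule finite_subset[of _ "Pow (fst G)"]) auto

lemma finite_clique_cards: "is_graph G \<Longrightarrow> finite {card C | C. is_clique G C}"
  unfolding is_graph_def is_clique_def
  by (rule finite_subset[of _ "card ` Pow (fst G)"]) auto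

lemma card_clique_le_clique_number:
  "is_graph G \<Longrightarrow> is_clique G C \<Longrightarrow> card C \<le> clique_number G"
  unfolding clique_number_def by (rule Max_ge[OF finite_clique_cards]) auto

lemma clique_number_eqI:
  assumes "is_graph G" "is_clique G C" "card C = k" "\<And>C. is_clique G C \<Longrightarrow> card C \<le> k"
  shows "clique_number G = k"
  unfolding clique_number_def using assms finite_clique_cards[OF assms(1)]
  by (intro Max_eqI) auto

lemma graph_iso_trans:
  assumes "graph_iso A B" "graph_iso B C"
  shows "graph_iso A C"
proof -
  obtain f where f: "bij_betw f (fst A) (fst B)"
    "\<forall>x \<in> fst A. \<forall>y \<in> fst A. {x, y} \<in> snd A \<longleftrightarrow> {f x, f y} \<in> snd B"
    using assms(1) unfolding graph_iso_def by blast
  obtain g where g: "bij_betw g (fst B) (fst C)"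
    "\<forall>x \<in> fst B. \<forall>y \<in> fst B. {x, y} \<in> snd B \<longleftrightarrow> {g x, g y} \<in> snd C"
    using assms(2) unfolding graph_iso_def by blast
  have "bij_betw (g \<circ> f) (fst A) (fst C)"
    using f(1) g(1) bij_betw_trans by blast
  moreover have "\<forall>x \<in> fst A. \<forall>y \<in> fst A. {x, y} \<in> snd A \<longleftrightarrow> {(g \<circ> f) x, (g \<circ> f) y} \<in> snd C"
    using f g bij_betwE[OF f(1)] by auto
  ultimately show ?thesis
    unfolding graph_iso_def by blast
qed

lemma graph_iso_card_eq: "graph_iso A B \<Longrightarrow> card (fst A) = card (fst B)"
  unfolding graph_iso_def using bij_betw_same_card by blast

lemma TJ_vertices: "fst (TJ k G) = cliques_of_size k G"
  unfolding TJ_def by simp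

lemma TJ_edge_iff:
  assumes "C \<in> cliques_of_size k G" "C' \<in> cliques_of_size k G"
  shows "{C, C'} \<in> snd (TJ k G) \<longleftrightarrow> card (C - C') = 1 \<and> card (C' - C) = 1"
  using assms unfolding TJ_def by (auto simp: doubleton_eq_iff)

lemma less_card_cliques_of_size:
  assumes "is_graph G" "is_clique G C" "n < card C"
  shows "n < card (cliques_of_size n G)"
proof -
  obtain S where S: "S \<subseteq> C" "card S = Suc n"
    using assms(3) by (meson Suc_leI obtain_subset_with_card_n)
  have "finite S"
    using S(2) card.infinite by fastforce
  have "is_clique G (S - {x})" for x
    using S(1) by (intro is_clique_subset[OF assms(2)]) blast
  then have "(\<lambda>x. S - {x}) ` S \<subseteq> cliques_of_size n G"
    using S(2) \<open>finite S\<close> unfolding cliques_of_size_def by auto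
  moreover have "inj_on (\<lambda>x. S - {x}) S"
    by (rule inj_onI) blast
  ultimately have "card S \<le> card (cliques_of_size n G)"
    using finite_cliques_of_size[OF assms(1)] by (metis card_image card_mono)
  then show ?thesis
    using S(2) by simp
qed

lemma clique_number_eq_if_few_cliques:
  assumes "is_graph G" "cliques_of_size n G \<noteq> {}" "card (cliques_of_size n G) \<le> n"
  shows "clique_number G = n"
proof -
  obtain C where "is_clique G C" "card C = n"
    using assms(2) unfolding cliques_of_size_def by auto
  moreover have "card C' \<le> n" if "is_clique G C'" for C'
    using less_card_cliques_of_size[OF assms(1) that] assms(3) by (meson le_less_trans not_le)
  ultimately show ?thesis
    using clique_number_eqI[OF assms(1)] by blast
qed

lemma max_TJ_graph_if_TJ_graph_large:
  assumes "TJ_graph n T" "fst T \<noteq> {}" "finite (fst T)" "card (fst T) \<le> n"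
  shows "max_TJ_graph n T"
proof -
  obtain G :: "nat graph" where G: "is_graph G" "graph_iso T (TJ n G)"
    using assms(1) unfolding TJ_graph_def by blast
  have card_eq: "card (cliques_of_size n G) = card (fst T)"
    using graph_iso_card_eq[OF G(2)] by (simp add: TJ_vertices)
  then have "cliques_of_size n G \<noteq> {}"
    using assms(2,3) by force
  then have "clique_number G = n"
    using clique_number_eq_if_few_cliques[OF G(1)] card_eq assms(4) by simp
  then show ?thesis
    using G unfolding max_TJ_graph_def by blast
qed

definition join_clique :: "'a graph \<Rightarrow> 'a set \<Rightarrow> 'a graph" where
  "join_clique G U = (fst G \<union> U, snd G \<union> {{u, v} | u v. u \<in> U \<and> v \<in> fst G \<union> U \<and> u \<noteq> v})"

lemma is_graph_join_clique: "is_graph G \<Longrightarrow> finite U \<Longrightarrow> is_graph (join_clique G U)"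
  unfolding is_graph_def join_clique_def by auto

lemma join_clique_edgeI:
  "u \<in> U \<Longrightarrow> v \<in> fst G \<union> U \<Longrightarrow> u \<noteq> v \<Longrightarrow> {u, v} \<in> snd (join_clique G U)"
  unfolding join_clique_def by auto

lemma is_clique_join_clique_Un:
  assumes "is_clique G A"
  shows "is_clique (join_clique G U) (A \<union> U)"
proof -
  have A: "A \<subseteq> fst G" "\<And>x y. x \<in> A \<Longrightarrow> y \<in> A \<Longrightarrow> x \<noteq> y \<Longrightarrow> {x, y} \<in> snd G"
    using assms unfolding is_clique_def by auto
  have "{x, y} \<in> snd (join_clique G U)" if xy: "x \<in> A \<union> U" "y \<in> A \<union> U" "x \<noteq> y" for x y
  proof -
    consider "x \<in> U" | "y \<in> U" | "x \<in> A" "y \<in> A"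
      using xy by blast
    then show ?thesis
    proof cases
      case 1
      then show ?thesis using xy A(1) by (intro join_clique_edgeI) auto
    next
      case 2
      then have "{y, x} \<in> snd (join_clique G U)"
        using xy A(1) by (intro join_clique_edgeI) auto
      then show ?thesis by (simp add: insert_commute)
    next
      case 3
      then show ?thesis using xy A(2) unfolding join_clique_def by simp
    qed
  qed
  then show ?thesis
    using A(1) unfolding is_clique_def join_clique_def by auto
qed

lemma is_clique_join_clique_Int:
  assumes "is_clique (join_clique G U) C" "fst G \<inter> U = {}"
  shows "is_clique G (C \<inter> fst G)"
  unfolding is_clique_def
proof (intro conjI ballI impI)
  fix x y assume xy: "x \<in> C \<inter> fst G" "y \<in> C \<inter> fst G" "x \<noteq> y"
  then have "{x, y} \<in> snd (join_clique G U)"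
    using assms(1) unfolding is_clique_def by blast
  moreover have "{x, y} \<noteq> {u, v}" if "u \<in> U" for u v
    using xy that assms(2) by (auto simp: doubleton_eq_iff)
  ultimately show "{x, y} \<in> snd G"
    unfolding join_clique_def by auto
qed auto

lemma cliques_of_size_join_clique:
  assumes "is_graph G" "finite U" "fst G \<inter> U = {}" "\<And>A. is_clique G A \<Longrightarrow> card A \<le> k"
  shows "cliques_of_size (k + card U) (join_clique G U) = (\<lambda>A. A \<union> U) ` cliques_of_size k G"
proof (intro equalityI subsetI)
  fix C assume "C \<in> (\<lambda>A. A \<union> U) ` cliques_of_size k G"
  then obtain A where A: "is_clique G A" "card A = k" "C = A \<union> U"
    unfolding cliques_of_size_def by auto
  have "A \<inter> U = {}"
    using A(1) assms(3) unfolding is_clique_def by blast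
  then have "card C = k + card U"
    using A finite_clique[OF assms(1) A(1)] assms(2) by (simp add: card_Un_disjoint)
  then show "C \<in> cliques_of_size (k + card U) (join_clique G U)"
    using is_clique_join_clique_Un[OF A(1)] A(3) unfolding cliques_of_size_def by simp
next
  fix C assume "C \<in> cliques_of_size (k + card U) (join_clique G U)"
  then have C: "is_clique (join_clique G U) C" "card C = k + card U"
    unfolding cliques_of_size_def by auto
  have C_split: "C = (C \<inter> fst G) \<union> (C \<inter> U)"
    using C(1) unfolding is_clique_def join_clique_def by auto
  have A: "is_clique G (C \<inter> fst G)"
    using is_clique_join_clique_Int[OF C(1) assms(3)] .
  have "card ((C \<inter> fst G) \<union> (C \<inter> U)) = card (C \<inter> fst G) + card (C \<inter> U)"
    using finite_clique[OF assms(1) A] assms(2,3) by (intro card_Un_disjoint) auto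
  then have "card (C \<inter> fst G) + card (C \<inter> U) = k + card U"
    using C(2) C_split by simp
  moreover have "card (C \<inter> U) \<le> card U"
    using assms(2) by (simp add: card_mono)
  ultimately have "card (C \<inter> fst G) = k" "card (C \<inter> U) = card U"
    using assms(4)[OF A] by auto
  then have "C \<inter> U = U"
    using assms(2) by (simp add: card_subset_eq)
  then have "C = (C \<inter> fst G) \<union> U"
    using C_split by simp
  then show "C \<in> (\<lambda>A. A \<union> U) ` cliques_of_size k G"
    using A \<open>card (C \<inter> fst G) = k\<close> unfolding cliques_of_size_def by blast
qed

lemma TJ_join_clique_iso:
  assumes "is_graph G" "finite U" "fst G \<inter> U = {}" "\<And>A. is_clique G A \<Longrightarrow> card A \<le> k"
  shows "graph_iso (TJ k G) (TJ (k + card U) (join_clique G U))"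
proof -
  have sub: "A \<subseteq> fst G" if "A \<in> cliques_of_size k G" for A
    using that unfolding cliques_of_size_def is_clique_def by auto
  have diff: "(A \<union> U) - (A' \<union> U) = A - A'" if "A \<in> cliques_of_size k G" for A A'
    using sub[OF that] assms(3) by auto
  have "inj_on (\<lambda>A. A \<union> U) (cliques_of_size k G)"
  proof (rule inj_onI)
    fix A A' assume "A \<in> cliques_of_size k G" "A' \<in> cliques_of_size k G" "A \<union> U = A' \<union> U"
    then show "A = A'"
      using diff[of A A'] diff[of A' A] by blast
  qed
  then have bij: "bij_betw (\<lambda>A. A \<union> U) (cliques_of_size k G)
      (cliques_of_size (k + card U) (join_clique G U))"
    using cliques_of_size_join_clique[OF assms] by (simp add: bij_betw_def)
  show ?thesis
    unfolding graph_iso_def TJ_vertices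
  proof (intro exI[of _ "\<lambda>A. A \<union> U"] conjI ballI bij)
    fix A A' assume A: "A \<in> cliques_of_size k G" "A' \<in> cliques_of_size k G"
    moreover have "A \<union> U \<in> cliques_of_size (k + card U) (join_clique G U)"
        "A' \<union> U \<in> cliques_of_size (k + card U) (join_clique G U)"
      using A bij_betwE[OF bij] by auto
    ultimately show "{A, A'} \<in> snd (TJ k G) \<longleftrightarrow>
        {A \<union> U, A' \<union> U} \<in> snd (TJ (k + card U) (join_clique G U))"
      using TJ_edge_iff[of A k G A'] TJ_edge_iff[of "A \<union> U" "k + card U" "join_clique G U" "A' \<union> U"]
        diff[of A A'] diff[of A' A] by simp
  qed
qed

lemma TJ_graph_if_max_TJ_graph:
  assumes "max_TJ_graph k T" "k \<le> n"
  shows "TJ_graph n T"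
proof -
  obtain G :: "nat graph" where G: "is_graph G" "clique_number G = k" "graph_iso T (TJ k G)"
    using assms(1) unfolding max_TJ_graph_def by blast
  have "finite (fst G)"
    using G(1) unfolding is_graph_def by blast
  then obtain M where M: "\<forall>v \<in> fst G. v < M"
    by (auto simp: finite_nat_set_iff_bounded)
  define U where "U = {M..<M + (n - k)}"
  have U: "finite U" "fst G \<inter> U = {}" "k + card U = n"
    using M assms(2) unfolding U_def by auto
  have "graph_iso (TJ k G) (TJ (k + card U) (join_clique G U))"
    using TJ_join_clique_iso[OF G(1) U(1,2)] card_clique_le_clique_number[OF G(1)] G(2) by simp
  then have "graph_iso T (TJ n (join_clique G U))"
    using graph_iso_trans[OF G(3)] U(3) by simp
  moreover have "is_graph (join_clique G U)"
    using is_graph_join_clique[OF G(1) U(1)] .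
  ultimately show ?thesis
    unfolding TJ_graph_def by blast
qed

theorem corollary4p14:
  fixes T :: "'a graph"
  assumes "is_graph T" and "fst T \<noteq> {}"
  shows "infinite {n :: nat. TJ_graph n T} \<longleftrightarrow> (\<exists>k :: nat. max_TJ_graph k T)"
proof
  assume "infinite {n :: nat. TJ_graph n T}"
  then obtain n where "card (fst T) \<le> n" "TJ_graph n T"
    unfolding infinite_nat_iff_unbounded_le by blast
  then have "max_TJ_graph n T"
    using max_TJ_graph_if_TJ_graph_large assms unfolding is_graph_def by blast
  then show "\<exists>k. max_TJ_graph k T" ..
next
  assume "\<exists>k. max_TJ_graph k T"
  then obtain k where "max_TJ_graph k T" ..
  then have "{k..} \<subseteq> {n. TJ_graph n T}"
    using TJ_graph_if_max_TJ_graph by blast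
  then show "infinite {n :: nat. TJ_graph n T}"
    using infinite_Ici infinite_super by blast
qed

end
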